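(* Let $p\in(0,1)$ and $x\geq 1$. Let $(\xi_n)_{n\geq1}$ be i.i.d. random variables with $\mathbf{P}(\xi_1=1)=p=1-\mathbf{P}(\xi_1=-1)$. Set $W_0:=x$, $B_1:=1$ and, for $n\geq 1$, $W_n:=W_{n-1}+\xi_nB_n$ and $B_{n+1}:=B_n2^{\xi_n}$. Let $f(x,p):=\mathbf{P}(W_n\leq 0 \text{ for some } n)$. Then $f(x,p)<1$ if and only if $x>2$ and $p<1/2$.
   Context: $W_n$ is the wealth of a gambler after $n$ rounds (initial fortune $x$) and $B_n$ is the bet at round $n$: the bet is doubled after each win ($\xi_n=1$) and halved after each loss ($\xi_n=-1$). $f(x,p)$ is the ruin probability. *)

theory Defs
  imports "HOL-Probability.Probability"
begin

text \<open>Bets: B_1 = 1, B_(n+1) = B_n * 2 powr xi_n (index 0 is unused).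
  The sequence xi is indexed from 1; xi 0 is ignored.\<close>
fun bet :: "(nat \<Rightarrow> real) \<Rightarrow> nat \<Rightarrow> real" where
  "bet e 0 = 1"
| "bet e (Suc 0) = 1"
| "bet e (Suc (Suc n)) = bet e (Suc n) * 2 powr e (Suc n)"

fun wealth :: "real \<Rightarrow> (nat \<Rightarrow> real) \<Rightarrow> nat \<Rightarrow> real" where
  "wealth x e 0 = x"
| "wealth x e (Suc n) = wealth x e n + e (Suc n) * bet e (Suc n)"

end

theory Submission
  imports Defs
begin

text \<open>
  Measured in units of the next bet, the wealth R_n = W_n / B_(n+1) is a Markov chain on its own:
  it moves from R to (R + 1) / 2 after a win and to 2 R - 2 after a loss, and ruin means reaching
  R <= 0. Its ruin probability Q is nonincreasing and satisfies
  Q(R) = p Q((R + 1) / 2) + (1 - p) Q(2 R - 2) for R > 0, with Q = 1 on R <= 0.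
  Evaluating this equation at R = 1, 3/2 and 2 gives Q(2) = 1, hence Q = 1 on R <= 2.
  For p >= 1/2 the decrements of the bounded nonincreasing sequence Q(1 + 2^n) are nondecreasing,
  so they vanish and Q = 1 everywhere.
  For p < 1/2 there are a > 2 and s > 0 with p a^s + (1 - p) 2^(-s) < 1; then
  max(1, (a - 2) (R - 2))^(-s) is excessive for the chain, so it dominates Q, and it is
  below 1 for large R, which a run of losses reaches with positive probability from any R > 2.
\<close>

section \<open>Wealth in units of the next bet\<close>

definition ratio_step :: "real \<Rightarrow> real \<Rightarrow> real" where
  "ratio_step R e = (R + e) / 2 powr e"

lemma ratio_step_win [simp]: "ratio_step R 1 = (R + 1) / 2"
  by (simp add: ratio_step_def)

lemma ratio_step_loss [simp]: "ratio_step R (-1) = 2 * R - 2"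
  by (simp add: ratio_step_def powr_minus_divide field_simps)

lemma bet_pos: "0 < bet e n"
  by (induction e n rule: bet.induct) simp_all

lemma wealth_eq_ratio_times_bet:
  "wealth x e n = foldl ratio_step x (map e [1..<Suc n]) * bet e (Suc n)"
proof (induction n)
  case (Suc n)
  let ?F = "foldl ratio_step x (map e [1..<Suc n])"
  have "wealth x e (Suc n) = (?F + e (Suc n)) * bet e (Suc n)"
    using Suc by (simp add: algebra_simps del: upt_Suc)
  also have "\<dots> = ratio_step ?F (e (Suc n)) * bet e (Suc (Suc n))"
    by (simp add: ratio_step_def del: upt_Suc)
  also have "ratio_step ?F (e (Suc n)) = foldl ratio_step x (map e [1..<Suc (Suc n)])"
    by (simp add: upt_Suc_append del: upt_Suc)
  finally show ?case .
qed simp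

fun ruins :: "real \<Rightarrow> real list \<Rightarrow> bool" where
  "ruins R [] \<longleftrightarrow> R \<le> 0"
| "ruins R (e # s) \<longleftrightarrow> R \<le> 0 \<or> ruins (ratio_step R e) s"

lemma ruins_nonpos: "R \<le> 0 \<Longrightarrow> ruins R s"
  by (cases s) auto

lemma ruins_iff_prefix: "ruins R s \<longleftrightarrow> (\<exists>n\<le>length s. foldl ratio_step R (take n s) \<le> 0)"
proof (induction s arbitrary: R)
  case (Cons e s)
  have ex_le_Suc: "(\<exists>n\<le>Suc m. P n) \<longleftrightarrow> P 0 \<or> (\<exists>n\<le>m. P (Suc n))"
    for m and P :: "nat \<Rightarrow> bool"
    using Ex_less_Suc2[of "Suc m" P] by (simp add: less_Suc_eq_le)
  show ?case
    by (simp only: ruins.simps Cons.IH length_Cons ex_le_Suc) simp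
qed simp

lemma ruins_first_signs_iff:
  "ruins x (map e [1..<Suc N]) \<longleftrightarrow> (\<exists>n\<le>N. wealth x e n \<le> 0)"
proof -
  have "take n (map e [1..<Suc N]) = map e [1..<Suc n]" if "n \<le> N" for n
    using that by (simp add: take_map del: upt_Suc)
  moreover have "wealth x e n \<le> 0 \<longleftrightarrow> foldl ratio_step x (map e [1..<Suc n]) \<le> 0" for n
    using bet_pos[of e "Suc n"]
    by (simp add: wealth_eq_ratio_times_bet mult_le_0_iff del: upt_Suc)
  ultimately show ?thesis
    by (auto simp: ruins_iff_prefix simp del: upt_Suc)
qed

section \<open>Ruin probabilities of the normalised wealth\<close>

text \<open>
  The probability of ruin within N rounds when the current wealth is R times the next bet.
\<close>

fun ruin_within :: "real \<Rightarrow> nat \<Rightarrow> real \<Rightarrow> real" where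
  "ruin_within p 0 R = (if R \<le> 0 then 1 else 0)"
| "ruin_within p (Suc N) R =
     (if R \<le> 0 then 1
      else p * ruin_within p N ((R + 1) / 2) + (1 - p) * ruin_within p N (2 * R - 2))"

declare ruin_within.simps(2) [simp del]

lemma ruin_within_Suc:
  "0 < R \<Longrightarrow> ruin_within p (Suc N) R
    = p * ruin_within p N ((R + 1) / 2) + (1 - p) * ruin_within p N (2 * R - 2)"
  by (simp add: ruin_within.simps(2))

definition ruin_prob :: "real \<Rightarrow> real \<Rightarrow> real" where
  "ruin_prob p R = (SUP N. ruin_within p N R)"

definition sign_lists :: "nat \<Rightarrow> real list set" where
  "sign_lists N = {s. set s \<subseteq> {1, -1} \<and> length s = N}"

definition path_weight :: "real \<Rightarrow> real list \<Rightarrow> real" where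
  "path_weight p s = (\<Prod>e\<leftarrow>s. if e = 1 then p else 1 - p)"

lemma finite_sign_lists: "finite (sign_lists N)"
  unfolding sign_lists_def by (rule finite_lists_length_eq) simp

lemma sign_lists_0: "sign_lists 0 = {[]}"
  by (auto simp: sign_lists_def)

lemma sum_sign_lists_Suc:
  "(\<Sum>s\<in>sign_lists (Suc N). f s) = (\<Sum>s\<in>sign_lists N. f (1 # s) + f (-1 # s))"
proof -
  have "(\<Sum>s\<in>sign_lists (Suc N). f s) = (\<Sum>(s, e)\<in>sign_lists N \<times> {1, -1}. f (e # s))"
    unfolding sign_lists_def lists_length_Suc_eq
    by (subst sum.reindex) (auto simp: inj_on_def case_prod_unfold)
  also have "\<dots> = (\<Sum>s\<in>sign_lists N. f (1 # s) + f (-1 # s))"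
    by (simp add: sum.cartesian_product[symmetric])
  finally show ?thesis .
qed

lemma sum_path_weight: "(\<Sum>s\<in>sign_lists N. path_weight p s) = 1"
  by (induction N) (simp_all add: sign_lists_0 sum_sign_lists_Suc path_weight_def
      flip: sum_distrib_right distrib_right)

lemma ruin_within_eq_sum_paths:
  "ruin_within p N R = (\<Sum>s\<in>sign_lists N. path_weight p s * of_bool (ruins R s))"
proof (induction N arbitrary: R)
  case 0
  then show ?case by (simp add: sign_lists_0 path_weight_def)
next
  case (Suc N)
  show ?case
  proof (cases "R \<le> 0")
    case True
    then show ?thesis by (simp add: ruin_within.simps(2) ruins_nonpos sum_path_weight)
  next
    case False
    then show ?thesis
      by (simp add: ruin_within_Suc sum_sign_lists_Suc Suc.IH path_weight_def sum.distrib sum_distrib_left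
          mult.assoc)
  qed
qed

lemma decseq_const_if_decrements_incseq:
  fixes G :: "nat \<Rightarrow> real"
  assumes dec: "decseq G" and bdd: "bdd_below (range G)"
    and inc: "incseq (\<lambda>n. G n - G (Suc n))"
  shows "G n = G 0"
proof -
  obtain L where "G \<longlonglongrightarrow> L"
    using decseq_convergent[OF dec, of "Inf (range G)"] bdd by (meson cInf_lower rangeI)
  then have "(\<lambda>n. G n - G (Suc n)) \<longlonglongrightarrow> L - L"
    by (intro tendsto_diff LIMSEQ_Suc)
  then have "G n - G (Suc n) \<le> 0" for n
    using incseq_le[OF inc] by fastforce
  then have "G (Suc n) = G n" for n
    using dec by (simp add: decseq_Suc_iff antisym)
  then show ?thesis
    by (induction n) simp_all
qed

lemma exists_contracting_exponent:
  fixes p :: real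
  assumes "0 < p" and "p < 1 / 2"
  obtains a s where "2 < a" and "0 < s" and "p * a powr s + (1 - p) * 2 powr (-s) < 1"
proof -
  \<comment> \<open>For a = exp c = 2^(1/(2p)) the derivative of p a^h + (1 - p) 2^(-h) at 0 is
    (p - 1/2) ln 2 < 0.\<close>
  define c where "c = ln 2 / (2 * p)"
  define f where "f h = p * exp (h * c) + (1 - p) * exp (h * (- ln 2))" for h
  have "(f has_real_derivative p * c - (1 - p) * ln 2) (at 0)"
    unfolding f_def by (auto intro!: derivative_eq_intros)
  moreover have "p * c - (1 - p) * ln 2 < 0"
    using assms by (simp add: c_def field_simps)
  ultimately obtain d where "0 < d" and d: "\<And>h. 0 < h \<Longrightarrow> h < d \<Longrightarrow> f (0 + h) < f 0"
    by (metis DERIV_neg_dec_right)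
  define s where "s = d / 2"
  have "0 < s" and "f s < 1"
    using \<open>0 < d\<close> d[of s] by (simp_all add: s_def f_def)
  moreover have "2 < exp c"
  proof -
    have "ln 2 < c"
      using assms by (simp add: c_def field_simps)
    then show ?thesis
      by (metis exp_ln exp_less_mono zero_less_numeral)
  qed
  moreover have "f s = p * exp c powr s + (1 - p) * 2 powr (-s)"
    by (simp add: f_def powr_def exp_of_nat_mult mult.commute)
  ultimately show ?thesis
    using that by auto
qed

text \<open>
  With v = (a - 2) (R - 2), a loss doubles v, and a win turns v into (v - (a - 2)) / 2, which is
  at least v / a as soon as v >= a.
\<close>

definition power_bound :: "real \<Rightarrow> real \<Rightarrow> real \<Rightarrow> real" where
  "power_bound a s R = max 1 ((a - 2) * (R - 2)) powr (-s)"

lemma power_bound_le_2: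
  assumes "2 < a" and "R \<le> 2"
  shows "power_bound a s R = 1"
proof -
  have "(a - 2) * (R - 2) \<le> 0"
    using assms by (intro mult_nonneg_nonpos) simp_all
  then show ?thesis
    by (simp add: power_bound_def max_def)
qed

lemma power_bound_less_1_iff: "0 < s \<Longrightarrow> power_bound a s R < 1 \<longleftrightarrow> 1 < (a - 2) * (R - 2)"
  by (cases "(a - 2) * (R - 2) = 1") (auto simp: power_bound_def max_def powr_less_one)

lemma power_bound_large: "1 \<le> (a - 2) * (R - 2) \<Longrightarrow> power_bound a s R = ((a - 2) * (R - 2)) powr (-s)"
  by (simp add: power_bound_def max_def)

lemma power_bound_loss:
  assumes "1 < (a - 2) * (R - 2)"
  shows "power_bound a s (2 * R - 2) = 2 powr (-s) * power_bound a s R"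
proof -
  have eq: "(a - 2) * (2 * R - 2 - 2) = 2 * ((a - 2) * (R - 2))"
    by (simp add: algebra_simps)
  have "1 \<le> (a - 2) * (2 * R - 2 - 2)"
    unfolding eq using assms by simp
  then have "power_bound a s (2 * R - 2) = ((a - 2) * (2 * R - 2 - 2)) powr (-s)"
    by (rule power_bound_large)
  also have "\<dots> = 2 powr (-s) * ((a - 2) * (R - 2)) powr (-s)"
    unfolding eq using assms by (simp add: powr_mult)
  also have "((a - 2) * (R - 2)) powr (-s) = power_bound a s R"
    using assms by (simp add: power_bound_large)
  finally show ?thesis .
qed

lemma power_bound_win:
  assumes a: "2 < a" and "0 \<le> s" and large: "1 < (a - 2) * (R - 2)"
  shows "power_bound a s ((R + 1) / 2) \<le> a powr s * power_bound a s R"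
proof -
  define v where "v = (a - 2) * (R - 2)"
  have "v / a \<le> max 1 ((v - (a - 2)) / 2)"
  proof (cases "v \<le> a")
    case False
    then have "0 \<le> (a - 2) * (v - a)"
      using a by simp
    then have "v / a \<le> (v - (a - 2)) / 2"
      using a by (simp add: field_simps ring_distribs)
    then show ?thesis
      by (rule max.coboundedI2)
  qed (use a in simp)
  moreover have "(a - 2) * ((R + 1) / 2 - 2) = (v - (a - 2)) / 2"
    by (simp add: v_def field_simps)
  then have "power_bound a s ((R + 1) / 2) = max 1 ((v - (a - 2)) / 2) powr (-s)"
    by (simp only: power_bound_def)
  ultimately have "power_bound a s ((R + 1) / 2) \<le> (v / a) powr (-s)"
    using a large assms(2) by (simp add: v_def powr_mono2')
  also have "\<dots> = a powr s * v powr (-s)"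
    using a large by (simp add: v_def powr_divide powr_minus_divide field_simps)
  also have "v powr (-s) = power_bound a s R"
    using large by (simp add: v_def power_bound_large)
  finally show ?thesis .
qed

locale coin =
  fixes p :: real
  assumes p_pos: "0 < p" and p_less_1: "p < 1"
begin

lemma path_weight_nonneg: "0 \<le> path_weight p s"
  unfolding path_weight_def using p_pos p_less_1 by (intro prod_list_nonneg) auto

lemma ruin_within_nonneg: "0 \<le> ruin_within p N R"
  by (simp add: ruin_within_eq_sum_paths path_weight_nonneg sum_nonneg)

lemma ruin_within_le_1: "ruin_within p N R \<le> 1"
proof -
  have "ruin_within p N R \<le> (\<Sum>s\<in>sign_lists N. path_weight p s)"
    unfolding ruin_within_eq_sum_paths
    by (intro sum_mono) (simp add: path_weight_nonneg mult_left_le)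
  then show ?thesis by (simp add: sum_path_weight)
qed

lemma ruin_within_nonpos: "R \<le> 0 \<Longrightarrow> ruin_within p N R = 1"
  by (cases N) (simp_all add: ruin_within.simps(2))

lemma ruin_within_Suc_mono: "ruin_within p N R \<le> ruin_within p (Suc N) R"
proof (induction N arbitrary: R)
  case 0
  show ?case
    by (cases "R \<le> 0") (simp_all add: ruin_within_nonneg ruin_within_nonpos)
next
  case (Suc N)
  show ?case
  proof (cases "R \<le> 0")
    case False
    have "p * ruin_within p N ((R + 1) / 2) + (1 - p) * ruin_within p N (2 * R - 2)
        \<le> p * ruin_within p (Suc N) ((R + 1) / 2) + (1 - p) * ruin_within p (Suc N) (2 * R - 2)"
      using Suc.IH p_pos p_less_1 by (intro add_mono mult_left_mono) auto
    then show ?thesis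
      using False by (simp add: ruin_within_Suc[of R])
  qed (simp add: ruin_within_nonpos)
qed

lemma ruin_within_antimono: "R \<le> R' \<Longrightarrow> ruin_within p N R' \<le> ruin_within p N R"
proof (induction N arbitrary: R R')
  case 0
  then show ?case by simp
next
  case (Suc N)
  show ?case
  proof (cases "R \<le> 0")
    case False
    have "p * ruin_within p N ((R' + 1) / 2) + (1 - p) * ruin_within p N (2 * R' - 2)
        \<le> p * ruin_within p N ((R + 1) / 2) + (1 - p) * ruin_within p N (2 * R - 2)"
      using Suc p_pos p_less_1 by (intro add_mono mult_left_mono) auto
    then show ?thesis
      using False Suc.prems by (simp add: ruin_within_Suc[of R] ruin_within_Suc[of R'])
  qed (simp add: ruin_within_nonpos ruin_within_le_1)
qed

lemma bdd_above_ruin_within: "bdd_above (range (\<lambda>N. ruin_within p N R))"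
  using ruin_within_le_1 by (intro bdd_aboveI) auto

lemma ruin_within_le_ruin_prob: "ruin_within p N R \<le> ruin_prob p R"
  unfolding ruin_prob_def by (rule cSUP_upper[OF _ bdd_above_ruin_within]) simp

lemma ruin_prob_le: "(\<And>N. ruin_within p N R \<le> b) \<Longrightarrow> ruin_prob p R \<le> b"
  unfolding ruin_prob_def by (rule cSUP_least) auto

lemma ruin_within_tendsto: "(\<lambda>N. ruin_within p N R) \<longlonglongrightarrow> ruin_prob p R"
  unfolding ruin_prob_def
  by (rule LIMSEQ_incseq_SUP[OF bdd_above_ruin_within]) (simp add: incseq_SucI ruin_within_Suc_mono)

lemma ruin_prob_nonneg: "0 \<le> ruin_prob p R"
  using ruin_within_le_ruin_prob[of 0 R] ruin_within_nonneg[of 0 R] by linarith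

lemma ruin_prob_le_1: "ruin_prob p R \<le> 1"
  by (rule ruin_prob_le) (rule ruin_within_le_1)

lemma ruin_prob_nonpos: "R \<le> 0 \<Longrightarrow> ruin_prob p R = 1"
  using ruin_within_le_ruin_prob[of 0 R] ruin_prob_le_1[of R] by simp

lemma ruin_prob_antimono: "R \<le> R' \<Longrightarrow> ruin_prob p R' \<le> ruin_prob p R"
  by (rule ruin_prob_le) (meson ruin_within_antimono ruin_within_le_ruin_prob order_trans)

lemma ruin_prob_step:
  assumes "0 < R"
  shows "ruin_prob p R = p * ruin_prob p ((R + 1) / 2) + (1 - p) * ruin_prob p (2 * R - 2)"
proof -
  have "(\<lambda>N. ruin_within p (Suc N) R) \<longlonglongrightarrow> ruin_prob p R"
    using ruin_within_tendsto by (rule LIMSEQ_Suc)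
  moreover have "(\<lambda>N. ruin_within p (Suc N) R)
      \<longlonglongrightarrow> p * ruin_prob p ((R + 1) / 2) + (1 - p) * ruin_prob p (2 * R - 2)"
    unfolding ruin_within_Suc[OF assms] by (intro tendsto_intros ruin_within_tendsto)
  ultimately show ?thesis by (rule LIMSEQ_unique)
qed

lemma ruin_prob_eq_1_if_le_2:
  assumes "R \<le> 2"
  shows "ruin_prob p R = 1"
proof -
  have "ruin_prob p 1 = p * ruin_prob p 1 + (1 - p)"
    using ruin_prob_step[of 1] by (simp add: ruin_prob_nonpos)
  then have "(1 - p) * (ruin_prob p 1 - 1) = 0"
    by (simp add: algebra_simps)
  then have Q1: "ruin_prob p 1 = 1"
    using p_less_1 by simp
  have "ruin_prob p 2 = p * ruin_prob p (3 / 2) + (1 - p) * ruin_prob p 2"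
    using ruin_prob_step[of 2] by simp
  then have Q2: "ruin_prob p 2 = ruin_prob p (3 / 2)"
    using p_pos by (simp add: algebra_simps)
  have "ruin_prob p (3 / 2) = p * ruin_prob p (5 / 4) + (1 - p)"
    using ruin_prob_step[of "3 / 2"] Q1 by simp
  also have "\<dots> \<ge> p * ruin_prob p 2 + (1 - p)"
    using ruin_prob_antimono[of "5 / 4" 2] p_pos by simp
  finally have "(1 - p) * 1 \<le> (1 - p) * ruin_prob p 2"
    using Q2 by (simp add: algebra_simps)
  then have "1 \<le> ruin_prob p 2"
    using p_less_1 by simp
  then show ?thesis
    using ruin_prob_antimono[OF assms] ruin_prob_le_1[of R] by linarith
qed

lemma ruin_prob_eq_1_if_half_le:
  assumes "1 / 2 \<le> p"
  shows "ruin_prob p R = 1"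
proof -
  define G where "G n = ruin_prob p (1 + 2 ^ n)" for n
  have win: "(1 + 2 ^ Suc n + 1) / 2 = 1 + (2::real) ^ n"
    and loss: "2 * (1 + 2 ^ Suc n) - 2 = (2::real) ^ Suc (Suc n)" for n
    by simp_all
  have "decseq G"
    unfolding G_def by (intro decseq_SucI ruin_prob_antimono) simp
  moreover have "bdd_below (range G)"
    unfolding G_def using ruin_prob_nonneg by (intro bdd_belowI) auto
  moreover have "incseq (\<lambda>n. G n - G (Suc n))"
  proof (rule incseq_SucI)
    fix n
    have "G (Suc n) = p * G n + (1 - p) * ruin_prob p (2 ^ Suc (Suc n))"
      unfolding G_def using ruin_prob_step[of "1 + 2 ^ Suc n"] by (simp only: win loss) (simp add: add_pos_nonneg)
    moreover have "(1 - p) * G (Suc (Suc n)) \<le> (1 - p) * ruin_prob p (2 ^ Suc (Suc n))"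
      unfolding G_def using p_less_1 by (intro mult_left_mono ruin_prob_antimono) simp_all
    ultimately have "p * (G n - G (Suc n)) \<le> (1 - p) * (G (Suc n) - G (Suc (Suc n)))"
      by (simp add: algebra_simps)
    moreover have "(1 - p) * (G n - G (Suc n)) \<le> p * (G n - G (Suc n))"
      using \<open>decseq G\<close> assms by (intro mult_right_mono) (auto simp: decseq_Suc_iff)
    ultimately have "(1 - p) * (G n - G (Suc n)) \<le> (1 - p) * (G (Suc n) - G (Suc (Suc n)))"
      by linarith
    then show "G n - G (Suc n) \<le> G (Suc n) - G (Suc (Suc n))"
      by (rule mult_left_le_imp_le) (use p_less_1 in simp)
  qed
  ultimately have "G n = G 0" for n
    by (rule decseq_const_if_decrements_incseq)
  moreover obtain n where "R < 2 ^ n"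
    using real_arch_pow[of 2 R] by auto
  ultimately have "1 \<le> ruin_prob p R"
    using ruin_prob_antimono[of R "1 + 2 ^ n"] ruin_prob_eq_1_if_le_2[of 2] by (simp add: G_def)
  then show ?thesis
    using ruin_prob_le_1[of R] by simp
qed

lemma ruin_prob_le_excessive:
  assumes nonpos: "\<And>R. R \<le> 0 \<Longrightarrow> 1 \<le> \<psi> R" and nonneg: "\<And>R. 0 \<le> \<psi> R"
    and excessive: "\<And>R. \<psi> R < 1 \<Longrightarrow> p * \<psi> ((R + 1) / 2) + (1 - p) * \<psi> (2 * R - 2) \<le> \<psi> R"
  shows "ruin_prob p R \<le> \<psi> R"
proof (rule ruin_prob_le)
  show "ruin_within p N R \<le> \<psi> R" for N
  proof (induction N arbitrary: R)
    case 0
    then show ?case using nonpos nonneg by simp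
  next
    case (Suc N)
    show ?case
    proof (cases "\<psi> R < 1")
      case True
      then have "0 < R"
        using nonpos[of R] by linarith
      have "p * ruin_within p N ((R + 1) / 2) + (1 - p) * ruin_within p N (2 * R - 2)
          \<le> p * \<psi> ((R + 1) / 2) + (1 - p) * \<psi> (2 * R - 2)"
        using Suc.IH p_pos p_less_1 by (intro add_mono mult_left_mono) auto
      then show ?thesis
        using excessive[OF True] by (simp add: ruin_within_Suc[OF \<open>0 < R\<close>])
    next
      case False
      then show ?thesis
        using ruin_within_le_1[of "Suc N" R] by simp
    qed
  qed
qed

lemma ruin_prob_less_1_if_large:
  assumes a: "2 < a" and s: "0 < s" and contract: "p * a powr s + (1 - p) * 2 powr (-s) \<le> 1"
    and large: "1 < (a - 2) * (R - 2)"
  shows "ruin_prob p R < 1"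
proof -
  have "ruin_prob p R \<le> power_bound a s R"
  proof (rule ruin_prob_le_excessive)
    show "1 \<le> power_bound a s R" if "R \<le> 0" for R
      using a that by (simp add: power_bound_le_2)
    show "0 \<le> power_bound a s R" for R
      by (simp add: power_bound_def)
    show "p * power_bound a s ((R + 1) / 2) + (1 - p) * power_bound a s (2 * R - 2)
        \<le> power_bound a s R" if "power_bound a s R < 1" for R
    proof -
      have v: "1 < (a - 2) * (R - 2)"
        using that s by (simp add: power_bound_less_1_iff)
      have "p * power_bound a s ((R + 1) / 2) + (1 - p) * power_bound a s (2 * R - 2)
          \<le> p * (a powr s * power_bound a s R) + (1 - p) * (2 powr (-s) * power_bound a s R)"
        using power_bound_win[OF a _ v] power_bound_loss[OF v] s p_pos p_less_1
        by (intro add_mono mult_left_mono) simp_all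
      also have "\<dots> = (p * a powr s + (1 - p) * 2 powr (-s)) * power_bound a s R"
        by (simp add: algebra_simps)
      also have "\<dots> \<le> power_bound a s R"
        using mult_right_mono[OF contract, of "power_bound a s R"] by (simp add: power_bound_def)
      finally show ?thesis .
    qed
  qed
  also have "power_bound a s R < 1"
    using large s by (simp add: power_bound_less_1_iff)
  finally show ?thesis .
qed

lemma ruin_prob_less_1_if_loss:
  assumes "0 < R" and "ruin_prob p (2 * R - 2) < 1"
  shows "ruin_prob p R < 1"
proof -
  have "ruin_prob p R \<le> p * 1 + (1 - p) * ruin_prob p (2 * R - 2)"
    unfolding ruin_prob_step[OF \<open>0 < R\<close>]
    using p_pos p_less_1 ruin_prob_le_1 by (intro add_mono mult_left_mono) simp_all
  also have "\<dots> < p * 1 + (1 - p) * 1"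
    using assms p_less_1 by (intro add_strict_left_mono mult_strict_left_mono) simp_all
  finally show ?thesis by simp
qed

lemma ruin_prob_less_1_if_losses:
  "2 < R \<Longrightarrow> ruin_prob p (2 + 2 ^ K * (R - 2)) < 1 \<Longrightarrow> ruin_prob p R < 1"
proof (induction K arbitrary: R)
  case (Suc K)
  have "2 + 2 ^ K * ((2 * R - 2) - 2) = 2 + 2 ^ Suc K * (R - 2)"
    by simp
  then have "ruin_prob p (2 + 2 ^ K * ((2 * R - 2) - 2)) < 1"
    using Suc.prems(2) by (simp only:)
  moreover have "2 < 2 * R - 2"
    using Suc.prems(1) by simp
  ultimately have "ruin_prob p (2 * R - 2) < 1"
    using Suc.IH by blast
  then show ?case
    by (rule ruin_prob_less_1_if_loss[rotated]) (use Suc.prems(1) in simp)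
qed simp

lemma ruin_prob_less_1:
  assumes "p < 1 / 2" and "2 < R"
  shows "ruin_prob p R < 1"
proof -
  obtain a s where a: "2 < a" and s: "0 < s" and contract: "p * a powr s + (1 - p) * 2 powr (-s) < 1"
    using exists_contracting_exponent[OF p_pos assms(1)] by blast
  obtain K where "1 / ((a - 2) * (R - 2)) < 2 ^ K"
    using real_arch_pow[of 2 "1 / ((a - 2) * (R - 2))"] by auto
  then have "1 < 2 ^ K * ((a - 2) * (R - 2))"
    using a assms(2) by (simp add: divide_less_eq)
  then have "1 < (a - 2) * (2 + 2 ^ K * (R - 2) - 2)"
    by (simp add: algebra_simps)
  then have "ruin_prob p (2 + 2 ^ K * (R - 2)) < 1"
    by (rule ruin_prob_less_1_if_large[OF a s less_imp_le[OF contract]])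
  then show ?thesis
    using assms(2) by (rule ruin_prob_less_1_if_losses[rotated])
qed

end

section \<open>The probabilistic model\<close>

locale iid_signs = prob_space M + coin p
  for M :: "'a measure" and p :: real +
  fixes \<xi> :: "nat \<Rightarrow> 'a \<Rightarrow> real"
  assumes indep: "indep_vars (\<lambda>_. borel) \<xi> {1..}"
    and prob_win: "\<And>n. 1 \<le> n \<Longrightarrow> prob {\<omega> \<in> space M. \<xi> n \<omega> = 1} = p"
    and prob_loss: "\<And>n. 1 \<le> n \<Longrightarrow> prob {\<omega> \<in> space M. \<xi> n \<omega> = -1} = 1 - p"
begin

lemma measurable_sign [measurable]: "\<xi> (Suc k) \<in> borel_measurable M"
  using indep by (auto simp: indep_vars_def)

lemma AE_sign:
  assumes "1 \<le> n"
  shows "AE \<omega> in M. \<xi> n \<omega> \<in> {1, -1}"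
proof -
  obtain k where n: "n = Suc k"
    using assms by (cases n) auto
  let ?A = "\<lambda>c. {\<omega> \<in> space M. \<xi> n \<omega> = c}"
  have sets: "?A c \<in> sets M" for c
    unfolding n by measurable
  have "prob (?A 1 \<union> ?A (-1)) = prob (?A 1) + prob (?A (-1))"
    using sets by (intro finite_measure_Union) auto
  also have "\<dots> = 1"
    using assms by (simp add: prob_win prob_loss)
  finally have "AE \<omega> in M. \<omega> \<in> ?A 1 \<union> ?A (-1)"
    by (rule AE_prob_1)
  then show ?thesis
    by eventually_elim auto
qed

definition first_signs :: "nat \<Rightarrow> 'a \<Rightarrow> real list" where
  "first_signs N \<omega> = map (\<lambda>k. \<xi> k \<omega>) [1..<Suc N]"

lemma first_signs_eq_iff:
  "first_signs N \<omega> = s \<longleftrightarrow> length s = N \<and> (\<forall>i<N. \<xi> (Suc i) \<omega> = s ! i)"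
  by (auto simp: first_signs_def list_eq_iff_nth_eq nth_map_upt simp del: upt_Suc)

lemma sets_first_signs_eq [measurable]: "{\<omega> \<in> space M. first_signs N \<omega> = s} \<in> sets M"
  unfolding first_signs_eq_iff by measurable

lemma AE_first_signs: "AE \<omega> in M. first_signs N \<omega> \<in> sign_lists N"
proof -
  have "AE \<omega> in M. \<forall>k\<in>{1..N}. \<xi> k \<omega> \<in> {1, -1}"
    by (intro AE_finite_allI AE_sign) auto
  then show ?thesis
    by eventually_elim (auto simp: first_signs_def sign_lists_def simp del: upt_Suc)
qed

lemma prob_first_signs_eq:
  assumes "s \<in> sign_lists N"
  shows "prob {\<omega> \<in> space M. first_signs N \<omega> = s} = path_weight p s"
proof (cases "N = 0")
  case True
  then show ?thesis
    using assms by (simp add: sign_lists_0 first_signs_def path_weight_def prob_space)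
next
  case False
  have len: "length s = N"
    using assms by (simp add: sign_lists_def)
  have signs: "s ! i \<in> {1, -1}" if "i < N" for i
  proof -
    have "s ! i \<in> set s"
      using that len by simp
    then show ?thesis
      using assms by (auto simp: sign_lists_def)
  qed
  have "{\<omega> \<in> space M. first_signs N \<omega> = s}
      = (\<Inter>i\<in>Suc ` {..<N}. \<xi> i -` {s ! (i - 1)} \<inter> space M)"
    using False len by (auto simp: first_signs_eq_iff)
  also have "prob \<dots> = (\<Prod>i\<in>Suc ` {..<N}. prob (\<xi> i -` {s ! (i - 1)} \<inter> space M))"
    using False by (intro indep_varsD[OF indep]) auto
  also have "\<dots> = (\<Prod>i<N. prob (\<xi> (Suc i) -` {s ! i} \<inter> space M))"
    by (simp add: prod.reindex)
  also have "\<dots> = (\<Prod>i<N. if s ! i = 1 then p else 1 - p)"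
  proof (rule prod.cong)
    fix i assume "i \<in> {..<N}"
    then show "prob (\<xi> (Suc i) -` {s ! i} \<inter> space M) = (if s ! i = 1 then p else 1 - p)"
      using signs[of i] prob_win[of "Suc i"] prob_loss[of "Suc i"]
      by (auto simp: vimage_def Int_def conj_commute)
  qed simp
  also have "\<dots> = path_weight p s"
    by (simp add: path_weight_def prod.list_conv_set_nth len atLeast0LessThan)
  finally show ?thesis .
qed

lemma prob_first_signs_event:
  assumes "{\<omega> \<in> space M. P (first_signs N \<omega>)} \<in> sets M"
  shows "prob {\<omega> \<in> space M. P (first_signs N \<omega>)}
    = (\<Sum>s\<in>sign_lists N. path_weight p s * of_bool (P s))"
proof -
  let ?S = "{s \<in> sign_lists N. P s}"
  have "AE \<omega> in M. \<omega> \<in> {\<omega> \<in> space M. P (first_signs N \<omega>)}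
      \<longleftrightarrow> \<omega> \<in> (\<Union>s\<in>?S. {\<omega> \<in> space M. first_signs N \<omega> = s})"
    using AE_first_signs[of N] by eventually_elim auto
  then have "prob {\<omega> \<in> space M. P (first_signs N \<omega>)}
      = prob (\<Union>s\<in>?S. {\<omega> \<in> space M. first_signs N \<omega> = s})"
    using assms by (rule measure_eq_AE) (simp add: sets.finite_UN finite_sign_lists)
  also have "\<dots> = (\<Sum>s\<in>?S. prob {\<omega> \<in> space M. first_signs N \<omega> = s})"
    by (intro finite_measure_finite_Union) (auto simp: finite_sign_lists disjoint_family_on_def)
  also have "\<dots> = (\<Sum>s\<in>?S. path_weight p s)"
    by (simp add: prob_first_signs_eq)
  also have "\<dots> = (\<Sum>s\<in>sign_lists N. path_weight p s * of_bool (P s))"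
    by (subst sum.inter_filter[OF finite_sign_lists]) (intro sum.cong, simp_all)
  finally show ?thesis .
qed

lemma measurable_bet [measurable]: "(\<lambda>\<omega>. bet (\<lambda>k. \<xi> k \<omega>) (Suc n)) \<in> borel_measurable M"
  by (induction n) simp_all

lemma measurable_wealth [measurable]: "(\<lambda>\<omega>. wealth x (\<lambda>k. \<xi> k \<omega>) n) \<in> borel_measurable M"
  by (induction n) simp_all

lemma prob_ruin_within:
  "prob {\<omega> \<in> space M. \<exists>n\<le>N. wealth x (\<lambda>k. \<xi> k \<omega>) n \<le> 0} = ruin_within p N x"
proof -
  have "{\<omega> \<in> space M. \<exists>n\<le>N. wealth x (\<lambda>k. \<xi> k \<omega>) n \<le> 0}
      = {\<omega> \<in> space M. ruins x (first_signs N \<omega>)}"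
    by (simp only: first_signs_def ruins_first_signs_iff)
  moreover have "{\<omega> \<in> space M. \<exists>n\<le>N. wealth x (\<lambda>k. \<xi> k \<omega>) n \<le> 0} \<in> sets M"
    by measurable
  ultimately show ?thesis
    by (simp add: prob_first_signs_event ruin_within_eq_sum_paths)
qed

lemma prob_ruin: "prob {\<omega> \<in> space M. \<exists>n. wealth x (\<lambda>k. \<xi> k \<omega>) n \<le> 0} = ruin_prob p x"
proof -
  let ?E = "\<lambda>N. {\<omega> \<in> space M. \<exists>n\<le>N. wealth x (\<lambda>k. \<xi> k \<omega>) n \<le> 0}"
  have "(\<lambda>N. prob (?E N)) \<longlonglongrightarrow> prob (\<Union>N. ?E N)"
    by (intro finite_Lim_measure_incseq incseq_SucI) (auto intro: le_SucI)
  moreover have "(\<Union>N. ?E N) = {\<omega> \<in> space M. \<exists>n. wealth x (\<lambda>k. \<xi> k \<omega>) n \<le> 0}"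
    by auto
  ultimately show ?thesis
    using ruin_within_tendsto by (simp add: prob_ruin_within LIMSEQ_unique)
qed

end

theorem theorem1p1:
  fixes M :: "'a measure" and \<xi> :: "nat \<Rightarrow> 'a \<Rightarrow> real" and p x :: real
  assumes "prob_space M"
    and "p > 0" and "p < 1" and "x \<ge> 1"
    and "prob_space.indep_vars M (\<lambda>_. borel) \<xi> {1..}"
    and "\<And>n. n \<ge> 1 \<Longrightarrow> measure M {\<omega> \<in> space M. \<xi> n \<omega> = 1} = p"
    and "\<And>n. n \<ge> 1 \<Longrightarrow> measure M {\<omega> \<in> space M. \<xi> n \<omega> = -1} = 1 - p"
  shows "measure M {\<omega> \<in> space M. \<exists>n. wealth x (\<lambda>k. \<xi> k \<omega>) n \<le> 0} < 1
           \<longleftrightarrow> (x > 2 \<and> p < 1/2)"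
proof -
  interpret iid_signs M p \<xi>
    by (rule iid_signs.intro[OF assms(1) coin.intro[OF assms(2,3)]
          iid_signs_axioms.intro[OF assms(5-7)]])
  have "ruin_prob p x = 1" if "\<not> (x > 2 \<and> p < 1 / 2)"
  proof (cases "x \<le> 2")
    case True
    then show ?thesis by (rule ruin_prob_eq_1_if_le_2)
  next
    case False
    with that have "1 / 2 \<le> p" by simp
    then show ?thesis by (rule ruin_prob_eq_1_if_half_le)
  qed
  then have "ruin_prob p x < 1 \<longleftrightarrow> x > 2 \<and> p < 1 / 2"
    using ruin_prob_less_1[of x] by (cases "x > 2 \<and> p < 1 / 2") auto
  then show ?thesis
    by (simp only: prob_ruin)
qed

end
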